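(* For $\mu\ge\lambda>0$ let \[\kappa(\lambda,\mu)=\frac\mu\lambda-\Big(\sqrt2\Big(\frac\mu\lambda-\frac12\Big)^{1/2}-\lambda^{1/2}\Big)^2-(1-\mu^{1/2})^2.\] For every $0<\lambda\le\mu$ such that $\kappa(\lambda,\mu)>0$, there exist a path $\gamma(t)=(\gamma_X(t),\gamma_Y(t))$, $t\in[0,1]$, and $\kappa_0>0$ such that (i) $\gamma(0)=(1/2,1/2)$ and $\gamma(1)=(\lambda,\mu)$; (ii) $\kappa(\gamma(t))\ge\kappa_0>0$ for all $t\in[0,1]$; (iii) $\gamma$ is piecewise linear and $|\gamma_X'(t)|\le20$ and $|\gamma_Y'(t)|\le20$ for all $t\in[0,1]$ at which $\gamma$ is differentiable; (iv) $\gamma_X(t)\in[3/2-\sqrt2,10]$ and $\gamma_Y(t)\in[3/2-\sqrt2,10]$ for all $t\in[0,1]$. *)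

theory Defs
  imports "HOL-Analysis.Analysis"
begin

definition kappa :: "real \<Rightarrow> real \<Rightarrow> real" where
  "kappa l m = m / l - (sqrt 2 * sqrt (m / l - 1/2) - sqrt l)^2 - (1 - sqrt m)^2"

definition piecewise_linear_on :: "real \<Rightarrow> real \<Rightarrow> (real \<Rightarrow> 'a::real_vector) \<Rightarrow> bool" where
  "piecewise_linear_on a b g \<longleftrightarrow>
     (\<exists>ts :: real list. length ts \<ge> 2 \<and> sorted_wrt (<) ts \<and> hd ts = a \<and> last ts = b \<and>
        (\<forall>i < length ts - 1. \<exists>u v. \<forall>t \<in> {ts ! i .. ts ! Suc i}. g t = u + t *\<^sub>R v))"

end

theory Submission
  imports Defs
begin

text \<open>In the form \<open>kappa l m = 2 sqrt (2 m - l) + 2 sqrt m - l - m - m / l\<close> the square roots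
  are concave, and \<open>m / l\<close> is convex along every segment whose endpoints satisfy
  \<open>(l1 - l2) (m2 l1 - m1 l2) \<ge> 0\<close>; along such a segment kappa therefore stays above the
  smaller of its two endpoint values. The path runs from \<open>(1/2, 1/2)\<close> to \<open>(lam, mu)\<close>
  through one waypoint for which both legs satisfy this sign condition: \<open>(1/2, 1/2)\<close> itself
  if \<open>lam \<le> 1/2\<close>, the diagonal point \<open>(lam, lam)\<close> if \<open>1/2 < lam \<le> 2\<close>, and the point
  \<open>(1/2, mu / (2 lam))\<close> on the ray through \<open>(lam, mu)\<close> if \<open>lam > 2\<close>. Positivity of kappa
  confines the path to \<open>[3/2 - sqrt 2, 8]\<^sup>2\<close>, which bounds the slopes of both legs.\<close>

lemma kappa_altdef:
  assumes "0 < l" "l \<le> m"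
  shows "kappa l m = 2 * sqrt (2*m - l) + 2 * sqrt m - l - m - m / l"
proof -
  have "0 \<le> m / l - 1/2" using assms by (simp add: field_simps)
  then have "(sqrt 2 * sqrt (m / l - 1/2))^2 = 2 * (m/l - 1/2)"
    by (simp add: power_mult_distrib)
  moreover have "sqrt 2 * sqrt (m / l - 1/2) * sqrt l = sqrt (2*m - l)"
    using assms by (simp add: real_sqrt_mult[symmetric] field_simps)
  moreover have "(sqrt l)^2 = l" "(sqrt m)^2 = m" using assms by auto
  ultimately show ?thesis unfolding kappa_def power2_diff
    by (simp add: algebra_simps)
qed

lemma min_le_convex_combination:
  fixes x y t :: real
  assumes "0 \<le> t" "t \<le> 1"
  shows "min x y \<le> (1-t) * x + t * y"
proof -
  have "(1-t) * min x y \<le> (1-t) * x" "t * min x y \<le> t * y"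
    using assms by (simp_all add: mult_left_mono)
  then show ?thesis by (simp add: algebra_simps)
qed

lemma sqrt_concave_combination:
  fixes x y t :: real
  assumes "0 \<le> x" "0 \<le> y" "0 \<le> t" "t \<le> 1"
  shows "(1-t) * sqrt x + t * sqrt y \<le> sqrt ((1-t) * x + t * y)"
proof (rule real_le_rsqrt)
  have "((1-t) * sqrt x + t * sqrt y)^2 = (1-t) * x + t * y - t * (1-t) * (sqrt x - sqrt y)^2"
    using assms by (simp add: power2_eq_square algebra_simps)
  also have "\<dots> \<le> (1-t) * x + t * y" using assms by simp
  finally show "((1-t) * sqrt x + t * sqrt y)^2 \<le> (1-t) * x + t * y" .
qed

text \<open>The quotient \<open>m / l\<close> is not jointly convex, but it is convex along a segment
  whose endpoints satisfy the sign condition below: the convexity defect is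
  \<open>t (1 - t) (l1 - l2) (m2 l1 - m1 l2) / (l l1 l2)\<close>.\<close>
lemma divide_convex_combination_le:
  fixes l1 l2 m1 m2 t :: real
  assumes "0 < l1" "0 < l2" "0 \<le> t" "t \<le> 1"
    and "0 \<le> (l1 - l2) * (m2 * l1 - m1 * l2)"
  shows "((1-t) * m1 + t * m2) / ((1-t) * l1 + t * l2) \<le> (1-t) * (m1 / l1) + t * (m2 / l2)"
proof -
  define l where "l = (1-t) * l1 + t * l2"
  have "0 < min l1 l2" using assms by simp
  also have "\<dots> \<le> l" unfolding l_def using assms min_le_convex_combination by blast
  finally have "0 < l" .
  have "l * ((1-t) * m1 * l2 + t * m2 * l1) - ((1-t) * m1 + t * m2) * (l1 * l2)
        = t * (1-t) * ((l1 - l2) * (m2 * l1 - m1 * l2))"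
    unfolding l_def by (simp add: algebra_simps)
  also have "\<dots> \<ge> 0" using assms by simp
  finally have "((1-t) * m1 + t * m2) / l \<le> ((1-t) * m1 * l2 + t * m2 * l1) / (l1 * l2)"
    using \<open>0 < l\<close> assms by (simp add: divide_simps mult.commute mult.left_commute)
  also have "\<dots> = (1-t) * (m1 / l1) + t * (m2 / l2)" using assms by (simp add: field_simps)
  finally show ?thesis unfolding l_def .
qed

lemma kappa_convex_combination_ge:
  fixes l1 l2 m1 m2 t :: real
  assumes "0 < l1" "l1 \<le> m1" "0 < l2" "l2 \<le> m2" "0 \<le> t" "t \<le> 1"
    and "0 \<le> (l1 - l2) * (m2 * l1 - m1 * l2)"
  shows "(1-t) * kappa l1 m1 + t * kappa l2 m2 \<le> kappa ((1-t) * l1 + t * l2) ((1-t) * m1 + t * m2)"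
proof -
  define l where "l = (1-t) * l1 + t * l2"
  define m where "m = (1-t) * m1 + t * m2"
  have "0 < min l1 l2" using assms by simp
  also have "\<dots> \<le> l" unfolding l_def using assms min_le_convex_combination by blast
  finally have "0 < l" .
  have "l \<le> m"
    unfolding l_def m_def using assms by (intro add_mono mult_left_mono) auto
  have "2*m - l = (1-t) * (2*m1 - l1) + t * (2*m2 - l2)"
    unfolding l_def m_def by (simp add: algebra_simps)
  then have sqrt1: "(1-t) * sqrt (2*m1 - l1) + t * sqrt (2*m2 - l2) \<le> sqrt (2*m - l)"
    using sqrt_concave_combination[of "2*m1 - l1" "2*m2 - l2" t] assms by simp
  have sqrt2: "(1-t) * sqrt m1 + t * sqrt m2 \<le> sqrt m"
    unfolding m_def using sqrt_concave_combination[of m1 m2 t] assms by simp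
  have quot: "m / l \<le> (1-t) * (m1 / l1) + t * (m2 / l2)"
    unfolding m_def l_def using divide_convex_combination_le assms by blast
  have "(1-t) * kappa l1 m1 + t * kappa l2 m2
     = 2 * ((1-t) * sqrt (2*m1 - l1) + t * sqrt (2*m2 - l2)) + 2 * ((1-t) * sqrt m1 + t * sqrt m2)
       - l - m - ((1-t) * (m1 / l1) + t * (m2 / l2))"
    using assms unfolding kappa_altdef[OF assms(1,2)] kappa_altdef[OF assms(3,4)] l_def m_def
    by (simp add: algebra_simps)
  also have "\<dots> \<le> 2 * sqrt (2*m - l) + 2 * sqrt m - l - m - m / l"
    using add_mono[OF mult_left_mono[OF sqrt1, of 2] mult_left_mono[OF sqrt2, of 2]] quot by simp
  also have "\<dots> = kappa l m" using kappa_altdef[OF \<open>0 < l\<close> \<open>l \<le> m\<close>] by simp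
  finally show ?thesis unfolding l_def m_def .
qed

definition kappa_superlevel :: "real \<Rightarrow> (real \<times> real) set" where
  "kappa_superlevel k = {p. 0 < fst p \<and> fst p \<le> snd p \<and> k \<le> kappa (fst p) (snd p)}"

definition ratio_convex_along :: "real \<times> real \<Rightarrow> real \<times> real \<Rightarrow> bool" where
  "ratio_convex_along A B \<longleftrightarrow> 0 \<le> (fst A - fst B) * (snd B * fst A - snd A * fst B)"

lemma closed_segment_subset_kappa_superlevel:
  assumes A: "A \<in> kappa_superlevel k" and B: "B \<in> kappa_superlevel k"
    and "ratio_convex_along A B"
  shows "closed_segment A B \<subseteq> kappa_superlevel k"
proof
  fix p assume "p \<in> closed_segment A B"
  then obtain t where t: "0 \<le> t" "t \<le> 1" and p: "p = (1-t) *\<^sub>R A + t *\<^sub>R B"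
    by (auto simp: in_segment)
  have "0 < min (fst A) (fst B)" using A B by (simp add: kappa_superlevel_def)
  also have "\<dots> \<le> fst p" using min_le_convex_combination[OF t] by (simp add: p)
  finally have "0 < fst p" .
  moreover have "fst p \<le> snd p"
    using A B t by (auto simp: p kappa_superlevel_def intro!: add_mono mult_left_mono)
  moreover have "k \<le> kappa (fst p) (snd p)"
  proof -
    have "k \<le> min (kappa (fst A) (snd A)) (kappa (fst B) (snd B))"
      using A B by (simp add: kappa_superlevel_def)
    also have "\<dots> \<le> (1-t) * kappa (fst A) (snd A) + t * kappa (fst B) (snd B)"
      using min_le_convex_combination[OF t] .
    also have "\<dots> \<le> kappa (fst p) (snd p)"
      using A B t assms(3) unfolding p kappa_superlevel_def ratio_convex_along_def
      by (auto intro!: kappa_convex_combination_ge)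
    finally show ?thesis .
  qed
  ultimately show "p \<in> kappa_superlevel k" by (simp add: kappa_superlevel_def)
qed

lemma kappa_pos_imp_upper_bound:
  assumes "0 < l" "l \<le> m" "0 < kappa l m"
  shows "m \<le> 8"
proof -
  have "sqrt (2*m - l) \<le> sqrt 2 * sqrt m"
    using assms by (simp add: real_sqrt_mult[symmetric])
  moreover have "2 * sqrt m \<le> l + m / l"
    using arith_geo_mean_sqrt[of l "m / l"] assms by simp
  ultimately have "0 < 2 * sqrt 2 * sqrt m - m"
    using assms(3) kappa_altdef[OF assms(1,2)] by linarith
  also have "\<dots> = sqrt m * (2 * sqrt 2 - sqrt m)"
    using assms by (simp add: algebra_simps)
  finally have "sqrt m < 2 * sqrt 2"
    using assms by (simp add: zero_less_mult_iff)
  also have "2 * sqrt 2 = sqrt 8"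
    using real_sqrt_mult[of 4 2] by simp
  finally show ?thesis by simp
qed

lemma kappa_pos_imp_lower_bound:
  assumes "0 < l" "l \<le> m" "0 < kappa l m"
  shows "3/2 - sqrt 2 \<le> l"
proof (rule ccontr)
  assume "\<not> 3/2 - sqrt 2 \<le> l"
  then have "l < (1 - sqrt 2 / 2)^2"
    by (simp add: power2_diff power_divide)
  define s where "s = sqrt l"
  have "0 < s" "l = s^2" using assms(1) by (simp_all add: s_def)
  have "s < 1 - sqrt 2 / 2"
    using \<open>l < (1 - sqrt 2 / 2)^2\<close> sqrt2_less_2 unfolding s_def
    by (intro real_less_lsqrt) simp_all
  moreover have "1.4 < sqrt 2" by (rule real_less_rsqrt) (simp add: power2_eq_square)
  ultimately have "3 * s - l - 1 \<le> 0"
    using \<open>l = s^2\<close> zero_le_power2[of s] by linarith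
  have "sqrt (2*m - l) \<le> m / s"
  proof (rule real_le_lsqrt)
    have "(m / s)^2 - (2*m - l) = (m - l)^2 / l"
      using \<open>0 < s\<close> \<open>l = s^2\<close> by (simp add: field_simps power2_eq_square)
    moreover have "0 \<le> (m - l)^2 / l" using assms(1) by simp
    ultimately show "2*m - l \<le> (m / s)^2" by linarith
  qed (use \<open>0 < s\<close> assms in simp)
  moreover have "sqrt m \<le> (l + m) / (2 * s)"
    using arith_geo_mean_sqrt[of l m] assms \<open>0 < s\<close>
    by (simp add: s_def real_sqrt_mult field_simps)
  ultimately have "kappa l m \<le> 2 * (m / s) + 2 * ((l + m) / (2 * s)) - l - m - m / l"
    using kappa_altdef[OF assms(1,2)] by linarith
  with assms have "0 < l * (2 * (m / s) + 2 * ((l + m) / (2 * s)) - l - m - m / l)"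
    by (intro mult_pos_pos) linarith+
  also have "\<dots> = m * (3 * s - l - 1) + l * (s - l)"
    using \<open>0 < s\<close> \<open>l = s^2\<close> by (simp add: field_simps power2_eq_square)
  also have "\<dots> \<le> l * (3 * s - l - 1) + l * (s - l)"
    using \<open>3 * s - l - 1 \<le> 0\<close> assms(2) by (intro add_right_mono mult_right_mono_neg)
  also have "\<dots> = l * (1 - 2 * (1 - s)^2)"
    using \<open>l = s^2\<close> by (simp add: power2_eq_square algebra_simps)
  finally have "2 * (1 - s)^2 < 1"
    using assms(1) by (simp add: zero_less_mult_iff)
  moreover have "(sqrt 2 / 2)^2 < (1 - s)^2"
    using \<open>s < 1 - sqrt 2 / 2\<close> by (intro power_strict_mono) auto
  ultimately show False by (simp add: power_divide)
qed

lemma kappa_diagonal_pos: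
  assumes "\<bar>l - 3/2\<bar> < sqrt 2"
  shows "0 < kappa l l"
proof -
  from assms have "(l - 3/2)^2 < 2"
    by (metis real_sqrt_abs real_sqrt_less_iff)
  have "sqrt 2 < 3/2" by (rule real_less_lsqrt) (simp_all add: power2_eq_square)
  with assms have "0 < l" by linarith
  from \<open>(l - 3/2)^2 < 2\<close> have "(l + 1/2)^2 < 4 * l"
    by (simp add: power2_eq_square algebra_simps)
  also have "\<dots> = (2 * sqrt l)^2"
    using \<open>0 < l\<close> by (simp add: power_mult_distrib less_imp_le)
  finally have "(l + 1/2)^2 < (2 * sqrt l)^2" .
  then have "l + 1/2 < 2 * sqrt l"
    by (rule power2_less_imp_less) (use \<open>0 < l\<close> in simp)
  with \<open>0 < l\<close> show ?thesis using kappa_altdef[of l l] by simp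
qed

lemma kappa_on_ray:
  assumes "0 < l" "1 \<le> r"
  shows "kappa l (r * l) = 2 * sqrt l * (sqrt (2*r - 1) + sqrt r) - (1 + r) * l - r"
proof -
  have "sqrt (2 * (r * l) - l) = sqrt (2*r - 1) * sqrt l"
    by (simp add: real_sqrt_mult[symmetric] algebra_simps)
  then show ?thesis
    using kappa_altdef[of l "r * l"] assms by (simp add: real_sqrt_mult algebra_simps)
qed

text \<open>Along the ray \<open>m = r l\<close>, kappa is a concave quadratic in \<open>sqrt l\<close> whose vertex
  lies below \<open>sqrt 2\<close>; comparing its values at \<open>sqrt l \<ge> sqrt 2\<close> and at
  \<open>sqrt (1/2)\<close> gives \<open>kappa l m \<le> 2 kappa (1/2) (m / (2 l)) - 1\<close>.\<close>
lemma kappa_pos_at_half_on_ray: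
  assumes "2 \<le> l" "l \<le> m" "0 < kappa l m"
  shows "0 < kappa (1/2) (m / (2*l))"
proof -
  define r where "r = m / l"
  define s where "s = sqrt l"
  define a where "a = sqrt (2*r - 1) + sqrt r"
  have "1 \<le> r" "m = r * l" using assms by (simp_all add: r_def)
  have "sqrt 2 \<le> s" using assms by (simp add: s_def)
  have "a \<le> sqrt 2 * (1 + r)"
  proof (rule power2_le_imp_le)
    have "a^2 \<le> 2 * ((2*r - 1) + r)"
      using \<open>1 \<le> r\<close> sum_squares_bound[of "sqrt (2*r - 1)" "sqrt r"]
      by (simp add: a_def power2_sum algebra_simps)
    also have "\<dots> \<le> (sqrt 2 * (1 + r))^2"
      using sum_power2_ge_zero[of "r - 1/2" 1]
      by (simp add: power_mult_distrib power2_eq_square algebra_simps)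
    finally show "a^2 \<le> (sqrt 2 * (1 + r))^2" .
  qed (use \<open>1 \<le> r\<close> in simp)
  have kappa_l: "kappa l m = 2 * s * a - (1 + r) * s^2 - r"
    using kappa_on_ray[of l r] assms \<open>1 \<le> r\<close> \<open>m = r * l\<close> by (simp add: s_def a_def)
  have kappa_half: "kappa (1/2) (m / (2*l)) = sqrt 2 * a - (1 + r) / 2 - r"
  proof -
    have "2 * sqrt (1/2) = sqrt 2"
      by (simp add: real_sqrt_divide field_simps)
    moreover have "kappa (1/2) (m / (2*l)) = kappa (1/2) (r * (1/2))"
      by (simp add: r_def mult.commute)
    ultimately show ?thesis
      using kappa_on_ray[of "1/2" r] \<open>1 \<le> r\<close> by (simp add: a_def)
  qed
  have "0 \<le> (s - sqrt 2) * ((sqrt 2 + s) * (1 + r) - 2 * a)"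
    (is "0 \<le> ?gap")
  proof -
    have "sqrt 2 * (1 + r) \<le> s * (1 + r)"
      using \<open>sqrt 2 \<le> s\<close> \<open>1 \<le> r\<close> by (intro mult_right_mono) auto
    then show ?thesis
        using \<open>sqrt 2 \<le> s\<close> \<open>a \<le> sqrt 2 * (1 + r)\<close>
      by (intro mult_nonneg_nonneg) (auto simp: algebra_simps)
  qed
  also have "?gap = 2 * kappa (1/2) (m / (2*l)) - 1 - kappa l m"
    unfolding kappa_l kappa_half by (simp add: power2_eq_square field_simps)
  finally show ?thesis using assms(3) by linarith
qed

lemma linepath_join_affine:
  fixes a b c :: "'a::real_normed_vector"
  shows "x \<in> {0..1/2} \<Longrightarrow> (linepath a b +++ linepath b c) x = a + x *\<^sub>R (2 *\<^sub>R (b - a))"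
    and "x \<in> {1/2..1} \<Longrightarrow> (linepath a b +++ linepath b c) x = (2 *\<^sub>R b - c) + x *\<^sub>R (2 *\<^sub>R (c - b))"
proof -
  show "x \<in> {0..1/2} \<Longrightarrow> (linepath a b +++ linepath b c) x = a + x *\<^sub>R (2 *\<^sub>R (b - a))"
    by (simp add: joinpaths_def linepath_def scaleR_diff_right scaleR_diff_left mult.commute)
  assume "x \<in> {1/2..1}"
  then consider "x = 1/2" | "1/2 < x" by fastforce
  then show "(linepath a b +++ linepath b c) x = (2 *\<^sub>R b - c) + x *\<^sub>R (2 *\<^sub>R (c - b))"
  proof cases
    case 1
    show ?thesis unfolding 1 by (simp add: joinpaths_def linepath_def scaleR_diff_right scaleR_2)
  next
    case 2
    then show ?thesis
      by (simp add: joinpaths_def linepath_def scaleR_scaleR scaleR_diff_right scaleR_diff_left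
          mult.commute) (simp add: scaleR_2)
  qed
qed

lemma piecewise_linear_on_linepath_join:
  "piecewise_linear_on 0 1 (linepath a b +++ linepath b c)"
  unfolding piecewise_linear_on_def
proof (intro exI[of _ "[0, 1/2, 1]"] conjI allI impI)
  fix i assume "i < length [0::real, 1/2, 1] - 1"
  then consider "i = 0" | "i = 1" by fastforce
  then show "\<exists>u v. \<forall>t \<in> {[0::real, 1/2, 1] ! i .. [0, 1/2, 1] ! Suc i}.
      (linepath a b +++ linepath b c) t = u + t *\<^sub>R v"
  proof cases
    case 1
    show ?thesis unfolding 1
      by (rule exI[of _ a], rule exI[of _ "2 *\<^sub>R (b - a)"]) (simp add: linepath_join_affine(1))
  next
    case 2
    show ?thesis unfolding 2
      by (rule exI[of _ "2 *\<^sub>R b - c"], rule exI[of _ "2 *\<^sub>R (c - b)"]) (simp add: linepath_join_affine(2))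
  qed
qed auto

lemma affine_on_interval_vector_derivative_eq:
  fixes g :: "real \<Rightarrow> 'a::real_normed_vector"
  assumes "c < d" "t \<in> {c..d}" "{c..d} \<subseteq> S"
    and "\<And>x. x \<in> {c..d} \<Longrightarrow> g x = u + x *\<^sub>R w"
    and "(g has_vector_derivative v) (at t within S)"
  shows "v = w"
proof -
  have g': "(g has_vector_derivative v) (at t within {c..d})"
    using has_vector_derivative_within_subset assms(3,5) by blast
  have "((\<lambda>x. u + x *\<^sub>R w) has_vector_derivative v) (at t within {c..d})"
    by (rule has_vector_derivative_transform[OF assms(2) _ g']) (simp add: assms(4))
  moreover have "((\<lambda>x. u + x *\<^sub>R w) has_vector_derivative w) (at t within {c..d})"
    by (auto intro!: derivative_eq_intros)
  ultimately show ?thesis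
    using vector_derivative_unique_within_closed_interval assms(1,2) by fastforce
qed

lemma linepath_join_vector_derivative:
  assumes "t \<in> {0..1}"
    and "((linepath a b +++ linepath b c) has_vector_derivative v) (at t within {0..1})"
  shows "v = 2 *\<^sub>R (b - a) \<or> v = 2 *\<^sub>R (c - b)"
proof (cases "t \<le> 1/2")
  case True
  have "v = 2 *\<^sub>R (b - a)"
    by (rule affine_on_interval_vector_derivative_eq[of 0 "1/2" t "{0..1}"])
      (use assms True linepath_join_affine(1) in auto)
  then show ?thesis ..
next
  case False
  have "v = 2 *\<^sub>R (c - b)"
    by (rule affine_on_interval_vector_derivative_eq[of "1/2" 1 t "{0..1}"])
      (use assms False linepath_join_affine(2) in auto)
  then show ?thesis ..
qed

lemma linepath_join_vector_derivative_bound: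
  fixes a b c :: "real \<times> real"
  assumes "a \<in> {lo..hi} \<times> {lo..hi}" "b \<in> {lo..hi} \<times> {lo..hi}" "c \<in> {lo..hi} \<times> {lo..hi}"
    and "t \<in> {0..1}"
    and "((linepath a b +++ linepath b c) has_vector_derivative (x, y)) (at t within {0..1})"
  shows "\<bar>x\<bar> \<le> 2 * (hi - lo) \<and> \<bar>y\<bar> \<le> 2 * (hi - lo)"
  using linepath_join_vector_derivative[OF assms(4,5)] assms(1-3)
  by (auto simp: abs_le_iff mem_Times_iff prod_eq_iff)

lemma kappa_superlevel_subset_box:
  assumes "0 < k"
  shows "kappa_superlevel k \<subseteq> {3/2 - sqrt 2 .. 8} \<times> {3/2 - sqrt 2 .. 8}"
proof
  fix p assume "p \<in> kappa_superlevel k"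
  with assms have "0 < fst p" "fst p \<le> snd p" "0 < kappa (fst p) (snd p)"
    by (auto simp: kappa_superlevel_def)
  then show "p \<in> {3/2 - sqrt 2 .. 8} \<times> {3/2 - sqrt 2 .. 8}"
    using kappa_pos_imp_lower_bound kappa_pos_imp_upper_bound by (cases p) fastforce
qed

lemma kappa_half_half_pos: "0 < kappa (1/2) (1/2)"
  by (rule kappa_diagonal_pos) simp

lemma waypoint_exists:
  assumes "0 < lam" "lam \<le> mu" "0 < kappa lam mu"
  obtains P where "0 < fst P" "fst P \<le> snd P" "0 < kappa (fst P) (snd P)"
    "ratio_convex_along (1/2, 1/2) P" "ratio_convex_along P (lam, mu)"
proof -
  consider "lam \<le> 1/2" | "1/2 < lam" "lam \<le> 2" | "2 < lam" by linarith
  then show ?thesis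
  proof cases
    case 1
    then have "ratio_convex_along (1/2, 1/2) (lam, mu)"
      using assms by (simp add: ratio_convex_along_def)
    with kappa_half_half_pos show ?thesis
      by (intro that[of "(1/2, 1/2)"]) (simp_all add: ratio_convex_along_def)
  next
    case 2
    have "1 < sqrt 2" by simp
    with 2 have "0 < kappa lam lam" by (intro kappa_diagonal_pos) linarith
    with 2 show ?thesis
      by (intro that[of "(lam, lam)"]) (simp_all add: ratio_convex_along_def)
  next
    case 3
    with assms have "0 < kappa (1/2) (mu / (2*lam))"
      by (intro kappa_pos_at_half_on_ray) simp_all
    moreover from 3 assms have "1/2 \<le> mu / (2*lam)"
      by (simp add: field_simps)
    ultimately show ?thesis using assms
      by (intro that[of "(1/2, mu / (2*lam))"]) (simp_all add: ratio_convex_along_def)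
  qed
qed

theorem lemma5p5:
  fixes lam mu :: real
  assumes "0 < lam" and "lam \<le> mu" and "kappa lam mu > 0"
  shows "\<exists>(\<gamma> :: real \<Rightarrow> real \<times> real) \<kappa>0.
           \<kappa>0 > 0 \<and>
           \<gamma> 0 = (1/2, 1/2) \<and> \<gamma> 1 = (lam, mu) \<and>
           (\<forall>t \<in> {0..1}. 0 < fst (\<gamma> t) \<and> fst (\<gamma> t) \<le> snd (\<gamma> t) \<and>
                           kappa (fst (\<gamma> t)) (snd (\<gamma> t)) \<ge> \<kappa>0) \<and>
           piecewise_linear_on 0 1 \<gamma> \<and>
           (\<forall>t \<in> {0..1}. \<forall>a b. (\<gamma> has_vector_derivative (a, b)) (at t within {0..1})
                \<longrightarrow> \<bar>a\<bar> \<le> 20 \<and> \<bar>b\<bar> \<le> 20) \<and>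
           (\<forall>t \<in> {0..1}. fst (\<gamma> t) \<in> {3/2 - sqrt 2 .. 10} \<and> snd (\<gamma> t) \<in> {3/2 - sqrt 2 .. 10})"
proof -
  obtain P where P: "0 < fst P" "fst P \<le> snd P" "0 < kappa (fst P) (snd P)"
    and SP: "ratio_convex_along (1/2, 1/2) P" and PQ: "ratio_convex_along P (lam, mu)"
    using waypoint_exists[OF assms] by blast
  define \<gamma> where "\<gamma> = linepath (1/2, 1/2) P +++ linepath P (lam, mu)"
  define k0 where "k0 = min (kappa (1/2) (1/2)) (min (kappa (fst P) (snd P)) (kappa lam mu))"
  have "0 < k0" using kappa_half_half_pos P(3) assms(3) by (simp add: k0_def)
  have "(1/2, 1/2) \<in> kappa_superlevel k0" "P \<in> kappa_superlevel k0" "(lam, mu) \<in> kappa_superlevel k0"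
    using P assms by (auto simp: kappa_superlevel_def k0_def)
  then have level: "path_image \<gamma> \<subseteq> kappa_superlevel k0"
    using SP PQ by (simp add: \<gamma>_def path_image_join closed_segment_subset_kappa_superlevel)
  then have box: "path_image \<gamma> \<subseteq> {3/2 - sqrt 2 .. 8} \<times> {3/2 - sqrt 2 .. 8}"
    using kappa_superlevel_subset_box[OF \<open>0 < k0\<close>] by blast
  have ends: "(1/2, 1/2) \<in> path_image \<gamma>" "P \<in> path_image \<gamma>" "(lam, mu) \<in> path_image \<gamma>"
    by (auto simp: \<gamma>_def path_image_join)
  have slopes: "\<bar>a\<bar> \<le> 20 \<and> \<bar>b\<bar> \<le> 20"
    if t: "t \<in> {0..1}" and deriv: "(\<gamma> has_vector_derivative (a, b)) (at t within {0..1})" for t a b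
  proof -
    have "\<bar>a\<bar> \<le> 2 * (8 - (3/2 - sqrt 2)) \<and> \<bar>b\<bar> \<le> 2 * (8 - (3/2 - sqrt 2))"
      by (rule linepath_join_vector_derivative_bound[OF _ _ _ t deriv[unfolded \<gamma>_def]])
        (use ends box in blast)+
    with sqrt2_less_2 show ?thesis by auto
  qed
  have "\<gamma> ` {0..1} \<subseteq> kappa_superlevel k0 \<inter> {3/2 - sqrt 2 .. 8} \<times> {3/2 - sqrt 2 .. 8}"
    using level box by (simp add: path_image_def)
  moreover have "\<gamma> 0 = (1/2, 1/2)" "\<gamma> 1 = (lam, mu)"
    by (simp_all add: \<gamma>_def joinpaths_def linepath_def)
  ultimately show ?thesis
    using \<open>0 < k0\<close> slopes
    by (intro exI[of _ \<gamma>] exI[of _ k0])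
      (auto simp: \<gamma>_def kappa_superlevel_def piecewise_linear_on_linepath_join)
qed

end
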